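(* Consider the delayed online learning protocol of the context. Assume the maximum delay is bounded by $\tau$, i.e. $\{1,\dots,t-\tau-1\}\subset\mathcal S_t$ for all $t$, and that $\|g_t\|_*\le G$ for all $t$. Let DDA be run with learning rates $\eta_t=\dfrac{r}{G\sqrt{t(1+2\tau)}}$. Then for every $p\in\mathcal X$ with $h(p)\le r^2$, \[R_T(p)\le 2rG\sqrt{T(1+2\tau)}.\]
   Context: Let $\mathcal V$ be a finite-dimensional real vector space with norm $\|\cdot\|$ and dual norm $\|\cdot\|_*$, and $\mathcal X\subset\mathcal V$ closed convex. A regularizer $h:\mathcal V\to\mathbb R\cup\{+\infty\}$ is lower semicontinuous, $1$-strongly convex w.r.t. $\|\cdot\|$ on $\mathcal X$, with $\mathcal X\subset\operatorname{dom}h$, whose subdifferential admits a continuous selection, and $h\ge0$. Protocol: at each round $t=1,\dots,T$ one agent $i(t)$ is active, plays $x_t\in\mathcal X$, incurs $f_t(x_t)$ ($f_t$ convex, $\mathcal X\subset\operatorname{dom}\partial f_t$); a subgradient $g_t\in\partial f_t(x_t)$ is revealed later. $\mathcal S^i_t\subset\{1,\dots,t-1\}$: timestamps of subgradients available to agent $i$ at time $t$, nondecreasing in $t$; $\mathcal S_t=\mathcal S^{i(t)}_t$. DDA: $x_t=\arg\min_{x\in\mathcal X}\{\sum_{s\in\mathcal S_t}\langle g_s,x\rangle+h(x)/\eta_t\}$. Regret: $R_T(p)=\sum_{t=1}^T f_t(x_t)-\sum_{t=1}^T f_t(p)$. Here $r>0$ and $G>0$ are constants. *)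

theory Defs
  imports "HOL-Analysis.Analysis"
begin

text \<open>The finite-dimensional real vector space V is modelled by a type of class
  euclidean_space; its inner product only serves as the duality pairing between V and V*.
  The (arbitrary) norm on V is a separate function N.\<close>

definition is_norm :: "('a::real_vector \<Rightarrow> real) \<Rightarrow> bool" where
  "is_norm N \<longleftrightarrow> (\<forall>x. 0 \<le> N x) \<and> (\<forall>x. N x = 0 \<longleftrightarrow> x = 0)
     \<and> (\<forall>c x. N (c *\<^sub>R x) = \<bar>c\<bar> * N x) \<and> (\<forall>x y. N (x + y) \<le> N x + N y)"

definition dual_norm :: "('a::real_inner \<Rightarrow> real) \<Rightarrow> 'a \<Rightarrow> real" where
  "dual_norm N g = Sup {g \<bullet> x | x. N x \<le> 1}"

definition edom :: "('a \<Rightarrow> ereal) \<Rightarrow> 'a set" where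
  "edom f = {x. f x < \<infinity>}"

definition proper_ext :: "('a \<Rightarrow> ereal) \<Rightarrow> bool" where
  "proper_ext f \<longleftrightarrow> (\<forall>x. f x \<noteq> -\<infinity>)"

definition lsc_ext :: "('a::topological_space \<Rightarrow> ereal) \<Rightarrow> bool" where
  "lsc_ext f \<longleftrightarrow> (\<forall>c. closed {x. f x \<le> c})"

definition convex_ext :: "('a::real_vector \<Rightarrow> ereal) \<Rightarrow> bool" where
  "convex_ext f \<longleftrightarrow> proper_ext f \<and> convex (edom f)
     \<and> convex_on (edom f) (\<lambda>x. real_of_ereal (f x))"

definition subdiff :: "('a::real_inner \<Rightarrow> ereal) \<Rightarrow> 'a \<Rightarrow> 'a set" where
  "subdiff f x = {g. f x \<noteq> \<infinity> \<and> f x \<noteq> -\<infinity> \<and>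
                     (\<forall>y. f x + ereal (g \<bullet> (y - x)) \<le> f y)}"

definition dom_subdiff :: "('a::real_inner \<Rightarrow> ereal) \<Rightarrow> 'a set" where
  "dom_subdiff f = {x. subdiff f x \<noteq> {}}"

text \<open>1-strong convexity with respect to N on a set X (X \<subseteq> dom h assumed separately).\<close>
definition strongly_convex_on :: "'a set \<Rightarrow> ('a::real_vector \<Rightarrow> real) \<Rightarrow> ('a \<Rightarrow> ereal) \<Rightarrow> bool" where
  "strongly_convex_on X N h \<longleftrightarrow>
     (\<forall>x\<in>X. \<forall>y\<in>X. \<forall>t::real. 0 \<le> t \<and> t \<le> 1 \<longrightarrow>
        real_of_ereal (h (t *\<^sub>R x + (1 - t) *\<^sub>R y))
          \<le> t * real_of_ereal (h x) + (1 - t) * real_of_ereal (h y)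
             - t * (1 - t) / 2 * (N (x - y))\<^sup>2)"

definition has_continuous_subgrad_selection :: "('a::real_inner \<Rightarrow> ereal) \<Rightarrow> bool" where
  "has_continuous_subgrad_selection h \<longleftrightarrow>
     (\<exists>\<sigma>. continuous_on (dom_subdiff h) \<sigma> \<and> (\<forall>x\<in>dom_subdiff h. \<sigma> x \<in> subdiff h x))"

definition is_argmin_on :: "'a set \<Rightarrow> ('a \<Rightarrow> real) \<Rightarrow> 'a \<Rightarrow> bool" where
  "is_argmin_on X L x \<longleftrightarrow> x \<in> X \<and> (\<forall>y\<in>X. L x \<le> L y)"

end

theory Submission
  imports Defs
begin

(* Write a_t = 1/eta_t and L_t = g_1 + ... + g_(t-1).  The iterate x_t minimises
   L'.v + a_t h(v), where L' misses at most tau of the gradients in L_t, each of dual norm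
   at most G.  By strong convexity of h, for every y in X the point a fraction tau/(tau+1)
   of the way from x_t to y has full objective L_t.z + a_t h(z) at most that of y plus
   g_t.(y - x_t) + (tau + 1/2) G^2/a_t.  Since a_t increases and h >= 0, a be-the-leader
   induction sums these estimates to
     sum_t g_t.(x_t - p) <= a_T h(p) + sum_t (tau + 1/2) G^2/a_t,
   and sum_t 1/sqrt t <= 2 sqrt T turns the right-hand side into 2 r G sqrt(T(1 + 2 tau)).
   Convexity of f_t enters only through the subgradient inequality. *)

lemma
  assumes "is_norm N"
  shows is_norm_nonneg: "0 \<le> N x"
    and is_norm_eq_zero: "N x = 0 \<longleftrightarrow> x = 0"
    and is_norm_scaleR: "N (c *\<^sub>R x) = \<bar>c\<bar> * N x"
    and is_norm_triangle: "N (x + y) \<le> N x + N y"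
  using assms unfolding is_norm_def by blast+

lemma is_norm_zero: "is_norm N \<Longrightarrow> N 0 = 0"
  by (simp add: is_norm_eq_zero)

lemma is_norm_minus_commute:
  assumes "is_norm N"
  shows "N (x - y) = N (y - x)"
  using is_norm_scaleR[OF assms, of "-1" "y - x"] by simp

lemma is_norm_sum_le:
  assumes "is_norm N"
  shows "N (sum f A) \<le> (\<Sum>i\<in>A. N (f i))"
proof (induction A rule: infinite_finite_induct)
  case (insert a A)
  then show ?case using is_norm_triangle[OF assms, of "f a" "sum f A"] by simp
qed (simp_all add: is_norm_zero[OF assms])

lemma is_norm_le_norm:
  fixes N :: "'a::euclidean_space \<Rightarrow> real"
  assumes "is_norm N"
  shows "N x \<le> (\<Sum>b\<in>Basis. N b) * norm x"
proof -
  have "N x = N (\<Sum>b\<in>Basis. (x \<bullet> b) *\<^sub>R b)" by (simp add: euclidean_representation)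
  also have "\<dots> \<le> (\<Sum>b\<in>Basis. N ((x \<bullet> b) *\<^sub>R b))" by (rule is_norm_sum_le[OF assms])
  also have "\<dots> = (\<Sum>b\<in>Basis. \<bar>x \<bullet> b\<bar> * N b)" by (simp add: is_norm_scaleR[OF assms])
  also have "\<dots> \<le> (\<Sum>b\<in>Basis. norm x * N b)"
    by (intro sum_mono mult_right_mono) (simp_all add: Basis_le_norm is_norm_nonneg[OF assms])
  finally show ?thesis by (simp add: sum_distrib_left mult.commute)
qed

lemma is_norm_ge_norm:
  fixes N :: "'a::euclidean_space \<Rightarrow> real"
  assumes "is_norm N"
  obtains m where "0 < m" "\<And>x. m * norm x \<le> N x"
proof -
  define C where "C = (\<Sum>b\<in>Basis. N b)"
  have "C-lipschitz_on (sphere 0 1) N"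
  proof (rule lipschitz_onI)
    fix x y :: 'a
    have "N x \<le> N y + N (x - y)" "N y \<le> N x + N (x - y)"
      using is_norm_triangle[OF assms, of y "x - y"] is_norm_triangle[OF assms, of x "y - x"]
        is_norm_minus_commute[OF assms, of x y] by simp_all
    moreover have "N (x - y) \<le> C * dist x y"
      using is_norm_le_norm[OF assms, of "x - y"] by (simp add: C_def dist_norm)
    ultimately show "dist (N x) (N y) \<le> C * dist x y" by (simp add: dist_real_def abs_le_iff)
  qed (simp add: C_def sum_nonneg is_norm_nonneg[OF assms])
  then have "continuous_on (sphere 0 1) N" by (rule lipschitz_on_continuous_on)
  moreover have "sphere (0::'a) 1 \<noteq> {}" by simp
  ultimately obtain x0 where x0: "x0 \<in> sphere 0 1" "\<And>y. y \<in> sphere 0 1 \<Longrightarrow> N x0 \<le> N y"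
    using continuous_attains_inf[OF compact_sphere] by blast
  have "N x0 * norm x \<le> N x" for x
  proof (cases "x = 0")
    case False
    then have "N x0 \<le> N (inverse (norm x) *\<^sub>R x)" by (intro x0(2)) simp
    then show ?thesis using False by (simp add: is_norm_scaleR[OF assms] field_simps)
  qed (simp add: is_norm_zero[OF assms])
  moreover have "0 < N x0"
    using x0(1) is_norm_nonneg[OF assms, of x0] is_norm_eq_zero[OF assms, of x0] by auto
  ultimately show ?thesis using that by blast
qed

lemma inner_le_dual_norm:
  fixes N :: "'a::euclidean_space \<Rightarrow> real"
  assumes "is_norm N"
  shows "g \<bullet> v \<le> dual_norm N g * N v"
proof (cases "v = 0")
  case False
  obtain m where m: "0 < m" "\<And>x. m * norm x \<le> N x" using is_norm_ge_norm[OF assms] by blast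
  have "bdd_above {g \<bullet> x | x. N x \<le> 1}"
  proof (rule bdd_aboveI)
    fix y assume "y \<in> {g \<bullet> x | x. N x \<le> 1}"
    then obtain x where x: "y = g \<bullet> x" "N x \<le> 1" by blast
    then have "norm x \<le> 1 / m" using m order_trans by (simp add: field_simps mult.commute) blast
    then have "norm g * norm x \<le> norm g * (1 / m)" by (rule mult_left_mono) simp
    then show "y \<le> norm g * (1 / m)" using x(1) norm_cauchy_schwarz[of g x] by linarith
  qed
  moreover have Nv: "0 < N v" using False is_norm_nonneg[OF assms, of v] is_norm_eq_zero[OF assms, of v] by auto
  then have "N (inverse (N v) *\<^sub>R v) \<le> 1" by (simp add: is_norm_scaleR[OF assms])
  ultimately have "g \<bullet> (inverse (N v) *\<^sub>R v) \<le> dual_norm N g"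
    unfolding dual_norm_def by (intro cSup_upper) blast+
  then show ?thesis using Nv by (simp add: field_simps)
qed (simp add: is_norm_zero[OF assms])

lemma subdiff_real_of_ereal_le:
  assumes "g \<in> subdiff f x" "p \<in> dom_subdiff f"
  shows "real_of_ereal (f x) - real_of_ereal (f p) \<le> g \<bullet> (x - p)"
proof -
  obtain A where A: "f x = ereal A" and ineq: "f x + ereal (g \<bullet> (p - x)) \<le> f p"
    using assms(1) unfolding subdiff_def by (cases "f x") auto
  moreover obtain B where "f p = ereal B"
    using assms(2) ineq A unfolding dom_subdiff_def subdiff_def by (cases "f p") auto
  ultimately show ?thesis by (simp add: inner_diff_right)
qed

definition strongly_convex_mod_on :: "real \<Rightarrow> 'a set \<Rightarrow> ('a::real_vector \<Rightarrow> real) \<Rightarrow> ('a \<Rightarrow> real) \<Rightarrow> bool" where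
  "strongly_convex_mod_on \<mu> X N \<Phi> \<longleftrightarrow>
     (\<forall>x\<in>X. \<forall>y\<in>X. \<forall>t::real. 0 \<le> t \<and> t \<le> 1 \<longrightarrow>
        \<Phi> (t *\<^sub>R x + (1 - t) *\<^sub>R y) \<le> t * \<Phi> x + (1 - t) * \<Phi> y - \<mu> * (t * (1 - t) / 2 * (N (x - y))\<^sup>2))"

lemma strongly_convex_mod_onD:
  "strongly_convex_mod_on \<mu> X N \<Phi> \<Longrightarrow> x \<in> X \<Longrightarrow> y \<in> X \<Longrightarrow> 0 \<le> t \<Longrightarrow> t \<le> 1 \<Longrightarrow>
     \<Phi> (t *\<^sub>R x + (1 - t) *\<^sub>R y) \<le> t * \<Phi> x + (1 - t) * \<Phi> y - \<mu> * (t * (1 - t) / 2 * (N (x - y))\<^sup>2)"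
  unfolding strongly_convex_mod_on_def by blast

lemma strongly_convex_on_linear_plus_scaled:
  assumes "strongly_convex_on X N h" "0 \<le> a"
  shows "strongly_convex_mod_on a X N (\<lambda>v. l \<bullet> v + a * real_of_ereal (h v))"
  unfolding strongly_convex_mod_on_def
proof (intro ballI allI impI)
  fix x y and t :: real
  assume "x \<in> X" "y \<in> X" "0 \<le> t \<and> t \<le> 1"
  then have "a * real_of_ereal (h (t *\<^sub>R x + (1 - t) *\<^sub>R y))
      \<le> a * (t * real_of_ereal (h x) + (1 - t) * real_of_ereal (h y) - t * (1 - t) / 2 * (N (x - y))\<^sup>2)"
    using assms unfolding strongly_convex_on_def by (intro mult_left_mono) auto
  then show "l \<bullet> (t *\<^sub>R x + (1 - t) *\<^sub>R y) + a * real_of_ereal (h (t *\<^sub>R x + (1 - t) *\<^sub>R y))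
      \<le> t * (l \<bullet> x + a * real_of_ereal (h x)) + (1 - t) * (l \<bullet> y + a * real_of_ereal (h y))
         - a * (t * (1 - t) / 2 * (N (x - y))\<^sup>2)"
    by (simp add: inner_add_right algebra_simps)
qed

lemma strongly_convex_mod_on_argmin_growth:
  assumes "convex X" "strongly_convex_mod_on \<mu> X N \<Phi>" "is_argmin_on X \<Phi> x" "y \<in> X"
  shows "\<Phi> x + \<mu> / 2 * (N (y - x))\<^sup>2 \<le> \<Phi> y"
proof -
  have "z * (\<mu> / 2 * (N (y - x))\<^sup>2) \<le> \<Phi> y - \<Phi> x" if z: "0 < z" "z < 1" for z
  proof -
    define s where "s = 1 - z"
    have s: "0 < s" "s \<le> 1" using z by (simp_all add: s_def)
    have xX: "x \<in> X" using assms(3) by (simp add: is_argmin_on_def)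
    then have "\<Phi> x \<le> \<Phi> (s *\<^sub>R y + (1 - s) *\<^sub>R x)"
      using assms(1,3,4) s by (simp add: is_argmin_on_def convex_def)
    also have "\<dots> \<le> s * \<Phi> y + (1 - s) * \<Phi> x - \<mu> * (s * (1 - s) / 2 * (N (y - x))\<^sup>2)"
      using strongly_convex_mod_onD[OF assms(2) assms(4) xX] s by simp
    finally have "s * (z * (\<mu> / 2 * (N (y - x))\<^sup>2)) \<le> s * (\<Phi> y - \<Phi> x)"
      by (simp add: s_def algebra_simps)
    then show ?thesis using s by simp
  qed
  then have "\<mu> / 2 * (N (y - x))\<^sup>2 \<le> \<Phi> y - \<Phi> x" by (rule field_le_mult_one_interval)
  then show ?thesis by simp
qed

text \<open>Moving the fraction k/(k+1) of the way from x to y balances the cost of the missing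
  term D against the strong-convexity gain; taking z = x would only give (k + 1)^2 G^2/(2a).\<close>
lemma strongly_convex_mod_on_argmin_perturbed:
  fixes N :: "'a::real_inner \<Rightarrow> real"
  assumes N: "is_norm N" and X: "convex X" and sc: "strongly_convex_mod_on a X N \<Phi>"
    and a: "0 < a" and x: "is_argmin_on X \<Phi> x" and y: "y \<in> X" and k: "0 \<le> k"
    and D: "\<And>v. D \<bullet> v \<le> k * G * N v" and g: "\<And>v. g \<bullet> v \<le> G * N v"
  shows "\<exists>z\<in>X. \<Phi> z + D \<bullet> z \<le> \<Phi> y + D \<bullet> y + g \<bullet> (y - x) + (k + 1/2) * G\<^sup>2 / a"
proof -
  define u where "u = N (y - x)"
  define w where "w = 1 / (k + 1)"
  define s where "s = k * w"
  define z where "z = s *\<^sub>R y + (1 - s) *\<^sub>R x"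
  have w: "w * (k + 1) = 1" using k by (simp add: w_def)
  have s: "0 \<le> s" "s \<le> 1" using k by (simp_all add: s_def w_def)
  have xX: "x \<in> X" using x by (simp add: is_argmin_on_def)
  have zX: "z \<in> X" using X xX y s by (simp add: z_def convex_def)
  have growth: "\<Phi> x + a / 2 * u\<^sup>2 \<le> \<Phi> y"
    using strongly_convex_mod_on_argmin_growth[OF X sc x y] by (simp add: u_def)
  have \<Phi>z: "\<Phi> z \<le> s * \<Phi> y + (1 - s) * \<Phi> x - a * (s * (1 - s) / 2 * u\<^sup>2)"
    using strongly_convex_mod_onD[OF sc y xX s] by (simp add: z_def u_def)
  have Dz: "D \<bullet> z = D \<bullet> y + (1 - s) * (D \<bullet> (x - y))"
    by (simp add: z_def inner_add_right inner_diff_right algebra_simps)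
  have "D \<bullet> (x - y) \<le> k * G * u" "g \<bullet> (x - y) \<le> G * u"
    using D[of "x - y"] g[of "x - y"] is_norm_minus_commute[OF N, of x y] by (simp_all add: u_def)
  then have Dxy: "(1 - s) * (D \<bullet> (x - y)) \<le> (1 - s) * (k * G * u)"
    and gxy: "- (g \<bullet> (y - x)) \<le> G * u"
    using s by (simp_all add: mult_left_mono inner_diff_right)
  have young: "G * q - a * q\<^sup>2 / 2 \<le> G\<^sup>2 / (2 * a)" for q
  proof -
    have "0 \<le> (G - a * q)\<^sup>2 / (2 * a)" using a by simp
    also have "\<dots> = G\<^sup>2 / (2 * a) - (G * q - a * q\<^sup>2 / 2)" using a by (simp add: field_simps power2_eq_square)
    finally show ?thesis by simp
  qed
  have "\<Phi> z + D \<bullet> z - (\<Phi> y + D \<bullet> y + g \<bullet> (y - x))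
      \<le> (1 - s) * (\<Phi> x - \<Phi> y) - a * (s * (1 - s) / 2 * u\<^sup>2) + (1 - s) * (k * G * u) + G * u"
    using \<Phi>z Dz Dxy gxy by (simp add: algebra_simps)
  also have "\<dots> \<le> (1 - s) * (- (a / 2 * u\<^sup>2)) - a * (s * (1 - s) / 2 * u\<^sup>2) + (1 - s) * (k * G * u) + G * u"
    using mult_left_mono[of "\<Phi> x - \<Phi> y" "- (a / 2 * u\<^sup>2)" "1 - s"] growth s by simp
  also have "\<dots> = (2 * k + 1) * (G * (u * w) - a * (u * w)\<^sup>2 / 2)"
    using w unfolding s_def by algebra
  also have "\<dots> \<le> (2 * k + 1) * (G\<^sup>2 / (2 * a))"
    using young k by (intro mult_left_mono) simp_all
  also have "\<dots> = (k + 1/2) * G\<^sup>2 / a" using a by (simp add: field_simps)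
  finally show ?thesis using zX by (intro bexI[of _ z]) simp_all
qed

lemma card_delayed_le:
  fixes t \<tau> :: nat
  assumes "{1..t - \<tau> - 1} \<subseteq> S"
  shows "card ({1..<t} - S) \<le> \<tau>"
proof -
  have "{1..<t} - S \<subseteq> {t - \<tau>..<t}"
  proof
    fix s assume s: "s \<in> {1..<t} - S"
    then have "s \<notin> {1..t - \<tau> - 1}" using assms by blast
    then show "s \<in> {t - \<tau>..<t}" using s by auto
  qed
  then have "card ({1..<t} - S) \<le> card {t - \<tau>..<t}" by (intro card_mono) simp_all
  then show ?thesis by simp
qed

lemma delayed_argmin_step:
  fixes N :: "'a::real_inner \<Rightarrow> real" and g :: "nat \<Rightarrow> 'a"
  assumes N: "is_norm N" and X: "convex X" and h: "strongly_convex_on X N h"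
    and a: "0 < a" and G: "0 \<le> G"
    and S: "S \<subseteq> {1..<t}" and delay: "{1..t - \<tau> - 1} \<subseteq> S"
    and g_past: "\<And>s v. s \<in> {1..<t} \<Longrightarrow> g s \<bullet> v \<le> G * N v"
    and g_now: "\<And>v. g t \<bullet> v \<le> G * N v"
    and x: "is_argmin_on X (\<lambda>v. (\<Sum>s\<in>S. g s) \<bullet> v + a * real_of_ereal (h v)) x"
    and y: "y \<in> X"
  shows "\<exists>z\<in>X. (\<Sum>s\<in>{1..<t}. g s) \<bullet> z + a * real_of_ereal (h z)
    \<le> (\<Sum>s\<in>{1..<t}. g s) \<bullet> y + a * real_of_ereal (h y) + g t \<bullet> (y - x) + (real \<tau> + 1/2) * G\<^sup>2 / a"
proof -
  define D where "D = (\<Sum>s\<in>{1..<t} - S. g s)"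
  have split: "(\<Sum>s\<in>{1..<t}. g s) = D + (\<Sum>s\<in>S. g s)"
    unfolding D_def by (rule sum.subset_diff[OF S]) simp
  have D_le: "D \<bullet> v \<le> real \<tau> * G * N v" for v
  proof -
    have "D \<bullet> v = (\<Sum>s\<in>{1..<t} - S. g s \<bullet> v)" by (simp add: D_def inner_sum_left)
    also have "\<dots> \<le> (\<Sum>s\<in>{1..<t} - S. G * N v)" using g_past by (intro sum_mono) auto
    also have "\<dots> = real (card ({1..<t} - S)) * (G * N v)" by simp
    also have "\<dots> \<le> real \<tau> * (G * N v)"
      using card_delayed_le[OF delay] G is_norm_nonneg[OF N] by (intro mult_right_mono) simp_all
    finally show ?thesis by simp
  qed
  obtain z where "z \<in> X" and z: "(\<Sum>s\<in>S. g s) \<bullet> z + a * real_of_ereal (h z) + D \<bullet> z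
      \<le> (\<Sum>s\<in>S. g s) \<bullet> y + a * real_of_ereal (h y) + D \<bullet> y + g t \<bullet> (y - x) + (real \<tau> + 1/2) * G\<^sup>2 / a"
    using strongly_convex_mod_on_argmin_perturbed[OF N X
        strongly_convex_on_linear_plus_scaled[OF h less_imp_le[OF a]] a x y _ D_le g_now]
    by auto
  then show ?thesis unfolding split inner_add_left by (intro bexI[of _ z]) (simp_all add: algebra_simps)
qed

lemma be_the_leader_regret_le:
  fixes g x :: "nat \<Rightarrow> 'a::real_inner" and a E :: "nat \<Rightarrow> real" and H :: "'a \<Rightarrow> real"
  assumes a_mono: "mono a" and a0: "0 \<le> a 0" and H: "\<And>v. v \<in> X \<Longrightarrow> 0 \<le> H v"
    and step: "\<And>t y. t \<in> {1..T} \<Longrightarrow> y \<in> X \<Longrightarrow> \<exists>z\<in>X.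
       (\<Sum>s\<in>{1..<t}. g s) \<bullet> z + a t * H z \<le> (\<Sum>s\<in>{1..<t}. g s) \<bullet> y + a t * H y + g t \<bullet> (y - x t) + E t"
    and p: "p \<in> X"
  shows "(\<Sum>t=1..T. g t \<bullet> (x t - p)) \<le> a T * H p + (\<Sum>t=1..T. E t)"
proof -
  have "\<forall>y\<in>X. (\<Sum>t=1..k. g t \<bullet> x t - E t) \<le> (\<Sum>s=1..k. g s) \<bullet> y + a k * H y" if "k \<le> T" for k
    using that
  proof (induction k)
    case 0
    then show ?case using a0 H by simp
  next
    case (Suc k)
    show ?case
    proof
      fix y assume "y \<in> X"
      then obtain z where "z \<in> X" and z: "(\<Sum>s=1..k. g s) \<bullet> z + a (Suc k) * H z
          \<le> (\<Sum>s=1..k. g s) \<bullet> y + a (Suc k) * H y + g (Suc k) \<bullet> (y - x (Suc k)) + E (Suc k)"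
        using step[of "Suc k" y] Suc.prems by (auto simp: atLeastLessThanSuc_atLeastAtMost)
      have "a k * H z \<le> a (Suc k) * H z"
        using a_mono H[OF \<open>z \<in> X\<close>] by (simp add: mono_def mult_right_mono)
      then have "(\<Sum>t=1..k. g t \<bullet> x t - E t) \<le> (\<Sum>s=1..k. g s) \<bullet> z + a (Suc k) * H z"
        using Suc \<open>z \<in> X\<close> by fastforce
      then show "(\<Sum>t=1..Suc k. g t \<bullet> x t - E t) \<le> (\<Sum>s=1..Suc k. g s) \<bullet> y + a (Suc k) * H y"
        using z by (simp add: inner_add_left inner_diff_right)
    qed
  qed
  from this[of T] p have "(\<Sum>t=1..T. g t \<bullet> x t - E t) \<le> (\<Sum>s=1..T. g s) \<bullet> p + a T * H p" by blast
  then show ?thesis by (simp add: inner_diff_right sum_subtractf inner_sum_left)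
qed

lemma sum_inverse_sqrt_le: "(\<Sum>t=1..T. 1 / sqrt (real t)) \<le> 2 * sqrt (real T)"
proof (induction T)
  case (Suc T)
  have "sqrt (real T) * sqrt (real T + 1) \<le> real T + 1/2"
  proof (rule power2_le_imp_le)
    show "(sqrt (real T) * sqrt (real T + 1))\<^sup>2 \<le> (real T + 1/2)\<^sup>2"
      by (simp add: power_mult_distrib power2_eq_square algebra_simps)
  qed simp
  then have "1 \<le> (2 * sqrt (real T + 1) - 2 * sqrt (real T)) * sqrt (real T + 1)"
    by (simp add: algebra_simps)
  then have "1 / sqrt (real T + 1) \<le> 2 * sqrt (real T + 1) - 2 * sqrt (real T)"
    by (simp add: divide_le_eq)
  then show ?case using Suc by (simp add: add.commute)
qed simp

lemma dda_sqrt_rate_bound: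
  fixes k r G Hp :: real
  assumes r: "0 < r" and G: "0 < G" and k: "0 \<le> k" and Hp: "Hp \<le> r\<^sup>2"
  shows "G * sqrt (real T * (1 + 2 * k)) / r * Hp
      + (\<Sum>t=1..T. (k + 1/2) * G\<^sup>2 / (G * sqrt (real t * (1 + 2 * k)) / r))
    \<le> 2 * r * G * sqrt (real T * (1 + 2 * k))"
proof -
  define c where "c = 1 + 2 * k"
  have c: "0 < c" "k + 1/2 = c / 2" using k by (simp_all add: c_def)
  have "G * sqrt (real T * c) / r * Hp \<le> G * sqrt (real T * c) / r * r\<^sup>2"
    using Hp r G c by (intro mult_left_mono) simp_all
  also have "\<dots> = sqrt c * G * r * sqrt (real T)"
    using r by (simp add: real_sqrt_mult power2_eq_square)
  finally have first: "G * sqrt (real T * c) / r * Hp \<le> sqrt c * G * r * sqrt (real T)" .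
  have "(k + 1/2) * G\<^sup>2 / (G * sqrt (real t * c) / r) = sqrt c * G * r / 2 * (1 / sqrt (real t))" for t
  proof (cases "t = 0")
    case False
    then have "0 < sqrt (real t)" by simp
    then show ?thesis unfolding c(2) using c G r by (simp add: real_sqrt_mult field_simps power2_eq_square)
  qed simp
  then have "(\<Sum>t=1..T. (k + 1/2) * G\<^sup>2 / (G * sqrt (real t * c) / r))
      = sqrt c * G * r / 2 * (\<Sum>t=1..T. 1 / sqrt (real t))"
    by (simp add: sum_distrib_left)
  also have "\<dots> \<le> sqrt c * G * r / 2 * (2 * sqrt (real T))"
    using sum_inverse_sqrt_le[of T] c G r by (intro mult_left_mono) simp_all
  finally have "(\<Sum>t=1..T. (k + 1/2) * G\<^sup>2 / (G * sqrt (real t * c) / r)) \<le> sqrt c * G * r * sqrt (real T)"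
    by simp
  moreover have "2 * r * G * sqrt (real T * c) = 2 * (sqrt c * G * r * sqrt (real T))"
    by (simp add: real_sqrt_mult)
  ultimately show ?thesis using first unfolding c_def by linarith
qed

theorem proposition1:
  fixes N :: "'a::euclidean_space \<Rightarrow> real"
    and X :: "'a set"
    and h :: "'a \<Rightarrow> ereal"
    and f :: "nat \<Rightarrow> 'a \<Rightarrow> ereal"
    and agent :: "nat \<Rightarrow> 'i"
    and S :: "'i \<Rightarrow> nat \<Rightarrow> nat set"
    and x g :: "nat \<Rightarrow> 'a"
    and T \<tau> :: nat
    and r G :: real
    and p :: 'a
  assumes norm: "is_norm N"
    and X_closed: "closed X" and X_convex: "convex X"
    and h_lsc: "lsc_ext h" and h_proper: "proper_ext h"
    and X_dom: "X \<subseteq> edom h"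
    and h_sc: "strongly_convex_on X N h"
    and h_sel: "has_continuous_subgrad_selection h"
    and h_nonneg: "\<And>v. 0 \<le> h v"
    and f_convex: "\<And>t. t \<in> {1..T} \<Longrightarrow> convex_ext (f t)"
    and f_dom: "\<And>t. t \<in> {1..T} \<Longrightarrow> X \<subseteq> dom_subdiff (f t)"
    and S_sub: "\<And>i t. t \<in> {1..T} \<Longrightarrow> S i t \<subseteq> {1..<t}"
    and S_mono: "\<And>i t t'. t \<in> {1..T} \<Longrightarrow> t' \<in> {1..T} \<Longrightarrow> t \<le> t' \<Longrightarrow> S i t \<subseteq> S i t'"
    and g_sub: "\<And>t. t \<in> {1..T} \<Longrightarrow> g t \<in> subdiff (f t) (x t)"
    and delay: "\<And>t. t \<in> {1..T} \<Longrightarrow> {1..t - \<tau> - 1} \<subseteq> S (agent t) t"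
    and g_bound: "\<And>t. t \<in> {1..T} \<Longrightarrow> dual_norm N (g t) \<le> G"
    and r_pos: "0 < r" and G_pos: "0 < G"
    and dda: "\<And>t. t \<in> {1..T} \<Longrightarrow>
       is_argmin_on X
         (\<lambda>y. (\<Sum>s\<in>S (agent t) t. g s \<bullet> y)
              + real_of_ereal (h y) / (r / (G * sqrt (real t * (1 + 2 * real \<tau>))))) (x t)"
    and p_X: "p \<in> X"
    and p_h: "h p \<le> ereal (r\<^sup>2)"
  shows "(\<Sum>t=1..T. real_of_ereal (f t (x t))) - (\<Sum>t=1..T. real_of_ereal (f t p))
           \<le> 2 * r * G * sqrt (real T * (1 + 2 * real \<tau>))"
proof -
  define a where "a t = G * sqrt (real t * (1 + 2 * real \<tau>)) / r" for t
  define H where "H v = real_of_ereal (h v)" for v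
  have g_le: "g t \<bullet> v \<le> G * N v" if "t \<in> {1..T}" for t v
    using inner_le_dual_norm[OF norm, of "g t" v] g_bound[OF that] is_norm_nonneg[OF norm, of v]
    by (meson mult_right_mono order_trans)
  have round: "\<exists>z\<in>X. (\<Sum>s\<in>{1..<t}. g s) \<bullet> z + a t * H z
      \<le> (\<Sum>s\<in>{1..<t}. g s) \<bullet> y + a t * H y + g t \<bullet> (y - x t) + (real \<tau> + 1/2) * G\<^sup>2 / a t"
    if t: "t \<in> {1..T}" and y: "y \<in> X" for t y
  proof -
    have "is_argmin_on X (\<lambda>v. (\<Sum>s\<in>S (agent t) t. g s) \<bullet> v + a t * real_of_ereal (h v)) (x t)"
      using dda[OF t] by (simp add: a_def inner_sum_left mult.commute)
    moreover have "0 < a t" using t r_pos G_pos by (simp add: a_def)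
    ultimately show ?thesis unfolding H_def
      using delayed_argmin_step[OF norm X_convex h_sc _ _ S_sub[OF t] delay[OF t]] g_le t y G_pos
      by (simp add: less_imp_le)
  qed
  have "mono a" unfolding a_def using r_pos G_pos
    by (intro monoI divide_right_mono mult_left_mono) simp_all
  then have "(\<Sum>t=1..T. g t \<bullet> (x t - p)) \<le> a T * H p + (\<Sum>t=1..T. (real \<tau> + 1/2) * G\<^sup>2 / a t)"
    by (rule be_the_leader_regret_le[OF _ _ _ round p_X]) (simp_all add: a_def H_def h_nonneg real_of_ereal_pos)
  also have "\<dots> \<le> 2 * r * G * sqrt (real T * (1 + 2 * real \<tau>))"
    unfolding a_def H_def using real_of_ereal_positive_mono[OF h_nonneg p_h] r_pos G_pos
    by (intro dda_sqrt_rate_bound) simp_all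
  moreover have "(\<Sum>t=1..T. real_of_ereal (f t (x t))) - (\<Sum>t=1..T. real_of_ereal (f t p))
      \<le> (\<Sum>t=1..T. g t \<bullet> (x t - p))"
    unfolding sum_subtractf[symmetric] using g_sub f_dom p_X
    by (intro sum_mono subdiff_real_of_ereal_le) auto
  ultimately show ?thesis by linarith
qed

end
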